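(* The kernel of the $\mathbb Z[\Gamma^2]$-module morphism $\Theta_2:\mathbb Z[\Gamma^2]\to H_1(P_2)$, $g\mapsto g.\partial T_2$, is the left ideal $\mathcal J_2:=I_H\cap I_V\cap I_D$. Its image $H_1(P_2)^0$ is the subgroup generated by the classes of $\delta_2[(a,ga),(a,gb),(b,gb)]$ for $a,b\in\mathbb P^1(\mathbb Q)$ and $g\in\Gamma$.
   Context: $\Gamma=PSL_2(\mathbb Z)$ acting on $P_1=\mathbb P^1(\mathbb Q)$; $P_2=P_1^2$ with diagonal $\Gamma^2$-action. $\mathbb Z[P_2^{m+1}]$ is the free abelian group on $(m+1)$-tuples of points of $P_2$; $\delta_1[x_0,x_1]=[x_1]-[x_0]$, $\delta_2[x_0,x_1,x_2]=[x_1,x_2]-[x_0,x_2]+[x_0,x_1]$; $\mathbb Z[P_2^2]^0=\ker\delta_1$, and similarly $\mathbb Z[P_1^2]^0\subset\mathbb Z[P_1^2]$. For $g\in\Gamma$ define maps $P_1\to P_2$: $\varphi_0^g(z)=(g\infty,z)$, $\varphi_1^g(z)=(z,gz)$, $\varphi_2^g(z)=(z,g0)$, extended to $\mathbb Z[P_1^2]\to\mathbb Z[P_2^2]$ by $[z_0,z_1]\mapsto[\varphi(z_0),\varphi(z_1)]$. Set $H_1(P_2)=\mathbb Z[P_2^2]^0/\sum_{j=0}^2\sum_{g\in\Gamma}\varphi_j^g(\mathbb Z[P_1^2]^0)$; $\Gamma^2$ acts diagonally and the action descends. $\partial T_2$ is the class of $\delta_2[(\infty,\infty),(0,\infty),(0,0)]$.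 Let $S=\pm\begin{pmatrix}0&-1\\1&0\end{pmatrix}$, $T=\pm\begin{pmatrix}1&1\\0&1\end{pmatrix}$, $U=\pm\begin{pmatrix}0&1\\-1&1\end{pmatrix}$, $\Gamma_\infty=\{T^n\}$, $\Gamma_0=\{(US)^n\}$, and for $\gamma\in\Gamma$, $\partial\gamma=[\gamma\infty]-[\gamma0]\in\mathbb Z[P_1]$. For $\sum_i\lambda_i(\alpha_i,\beta_i)\in\mathbb Z[\Gamma^2]$ with distinct pairs: it lies in $I_H$ iff $\sum_{i:\beta_i\in C}\lambda_i\partial\alpha_i=0$ for all $C\in\Gamma/\Gamma_\infty$; in $I_V$ iff $\sum_{i:\alpha_i\in C}\lambda_i\partial\beta_i=0$ for all $C\in\Gamma/\Gamma_0$; in $I_D$ iff $\sum_{i:\beta_i\alpha_i^{-1}=g}\lambda_i\partial\alpha_i=0$ for all $g\in\Gamma$. *)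

theory Defs
  imports Complex_Main "HOL-Library.Poly_Mapping"
begin

text \<open>Integer 2x2 matrices (a,b,c,d) = [[a,b],[c,d]]. An element of PSL_2(Z) is
  represented by its unique representative of determinant 1 with
  c > 0, or c = 0 and d > 0 (the sign class of the matrix).\<close>

type_synonym imat = "int \<times> int \<times> int \<times> int"

definition psl_normal :: "imat \<Rightarrow> bool" where
  "psl_normal m = (case m of (a,b,c,d) \<Rightarrow> a*d - b*c = 1 \<and> (c > 0 \<or> (c = 0 \<and> d > 0)))"

definition psl_norm :: "imat \<Rightarrow> imat" where
  "psl_norm m = (case m of (a,b,c,d) \<Rightarrow>
     if c > 0 \<or> (c = 0 \<and> d > 0) then (a,b,c,d) else (-a,-b,-c,-d))"

typedef psl2 = "{m. psl_normal m}"
  by (rule exI[of _ "(1,0,0,1)"]) (simp add: psl_normal_def)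

definition imat_mult :: "imat \<Rightarrow> imat \<Rightarrow> imat" where
  "imat_mult m n = (case m of (a,b,c,d) \<Rightarrow> case n of (e,f,g,h) \<Rightarrow>
     (a*e + b*g, a*f + b*h, c*e + d*g, c*f + d*h))"

text \<open>The class of the integer matrix m (assumed of determinant 1) in PSL_2(Z).\<close>
definition psl_of :: "imat \<Rightarrow> psl2" where
  "psl_of m = Abs_psl2 (psl_norm m)"

definition psl_mult :: "psl2 \<Rightarrow> psl2 \<Rightarrow> psl2" (infixl "\<cdot>\<^sub>\<Gamma>" 70) where
  "g \<cdot>\<^sub>\<Gamma> h = psl_of (imat_mult (Rep_psl2 g) (Rep_psl2 h))"

definition psl_one :: psl2 where
  "psl_one = psl_of (1,0,0,1)"

definition psl_inv :: "psl2 \<Rightarrow> psl2" where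
  "psl_inv g = (case Rep_psl2 g of (a,b,c,d) \<Rightarrow> psl_of (d,-b,-c,a))"

fun psl_npow :: "psl2 \<Rightarrow> nat \<Rightarrow> psl2" where
  "psl_npow g 0 = psl_one"
| "psl_npow g (Suc n) = g \<cdot>\<^sub>\<Gamma> psl_npow g n"

definition psl_zpow :: "psl2 \<Rightarrow> int \<Rightarrow> psl2" where
  "psl_zpow g n = (if n \<ge> 0 then psl_npow g (nat n) else psl_npow (psl_inv g) (nat (-n)))"

definition S_mat :: psl2 where "S_mat = psl_of (0,-1,1,0)"
definition T_mat :: psl2 where "T_mat = psl_of (1,1,0,1)"
definition U_mat :: psl2 where "U_mat = psl_of (0,1,-1,1)"

definition Gamma_inf :: "psl2 set" where
  "Gamma_inf = {psl_zpow T_mat n | n. True}"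
definition Gamma_0 :: "psl2 set" where
  "Gamma_0 = {psl_zpow (U_mat \<cdot>\<^sub>\<Gamma> S_mat) n | n. True}"

text \<open>Left coset g H; the elements of Gamma/H are exactly the sets lcoset g H.\<close>
definition lcoset :: "psl2 \<Rightarrow> psl2 set \<Rightarrow> psl2 set" where
  "lcoset g H = {g \<cdot>\<^sub>\<Gamma> h | h. h \<in> H}"

text \<open>P^1(Q) = Q \<union> {\<infinity>}, with None = \<infinity>.\<close>
type_synonym P1 = "rat option"
type_synonym P2 = "P1 \<times> P1"

definition infty :: P1 where "infty = None"

text \<open>Moebius action z \<mapsto> (az+b)/(cz+d); independent of the sign of the matrix.\<close>
definition act :: "psl2 \<Rightarrow> P1 \<Rightarrow> P1" where
  "act g z = (case Rep_psl2 g of (a,b,c,d) \<Rightarrow>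
     (case z of
        None \<Rightarrow> (if c = 0 then None else Some (of_int a / of_int c))
      | Some x \<Rightarrow> (if of_int c * x + of_int d = 0 then None
                   else Some ((of_int a * x + of_int b) / (of_int c * x + of_int d)))))"

text \<open>Z[X] is the free abelian group of finitely supported int-valued functions on X; [x] = frag_of x.\<close>

definition delta1 :: "(('a \<times> 'a) \<Rightarrow>\<^sub>0 int) \<Rightarrow> ('a \<Rightarrow>\<^sub>0 int)" where
  "delta1 = frag_extend (\<lambda>(x0,x1). frag_of x1 - frag_of x0)"

definition delta2 :: "(('a \<times> 'a \<times> 'a) \<Rightarrow>\<^sub>0 int) \<Rightarrow> (('a \<times> 'a) \<Rightarrow>\<^sub>0 int)" where
  "delta2 = frag_extend (\<lambda>(x0,x1,x2). frag_of (x1,x2) - frag_of (x0,x2) + frag_of (x0,x1))"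

definition cycles0 :: "((('a \<times> 'a) \<Rightarrow>\<^sub>0 int)) set" where
  "cycles0 = {c. delta1 c = 0}"

definition push2 :: "('a \<Rightarrow> 'b) \<Rightarrow> (('a \<times> 'a) \<Rightarrow>\<^sub>0 int) \<Rightarrow> (('b \<times> 'b) \<Rightarrow>\<^sub>0 int)" where
  "push2 f = frag_extend (\<lambda>(z0,z1). frag_of (f z0, f z1))"

definition phi :: "nat \<Rightarrow> psl2 \<Rightarrow> P1 \<Rightarrow> P2" where
  "phi j g z = (if j = 0 then (act g infty, z)
                else if j = 1 then (z, act g z)
                else (z, act g (Some 0)))"

inductive_set zspan :: "'a::ab_group_add set \<Rightarrow> 'a set" for A where
  zspan_zero: "0 \<in> zspan A"
| zspan_gen: "a \<in> A \<Longrightarrow> a \<in> zspan A"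
| zspan_diff: "x \<in> zspan A \<Longrightarrow> y \<in> zspan A \<Longrightarrow> x - y \<in> zspan A"

definition Bsub :: "(((P2 \<times> P2) \<Rightarrow>\<^sub>0 int)) set" where
  "Bsub = zspan (\<Union>j\<in>{0,1,2}. \<Union>g. push2 (phi j g) ` cycles0)"

text \<open>The class in H_1(P_2) = Z[P_2^2]^0 / Bsub of a cycle c, as a coset.\<close>
definition H1cls :: "((P2 \<times> P2) \<Rightarrow>\<^sub>0 int) \<Rightarrow> (((P2 \<times> P2) \<Rightarrow>\<^sub>0 int)) set" where
  "H1cls c = {c + b | b. b \<in> Bsub}"

definition actP2 :: "psl2 \<times> psl2 \<Rightarrow> P2 \<Rightarrow> P2" where
  "actP2 gh p = (act (fst gh) (fst p), act (snd gh) (snd p))"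

definition actC :: "psl2 \<times> psl2 \<Rightarrow> ((P2 \<times> P2) \<Rightarrow>\<^sub>0 int) \<Rightarrow> ((P2 \<times> P2) \<Rightarrow>\<^sub>0 int)" where
  "actC gh = push2 (actP2 gh)"

definition dT2 :: "((P2 \<times> P2) \<Rightarrow>\<^sub>0 int)" where
  "dT2 = delta2 (frag_of ((infty,infty), (Some 0,infty), (Some 0,Some 0)))"

text \<open>Theta_2 : Z[Gamma^2] \<rightarrow> H_1(P_2), g \<mapsto> g.dT2 (on representatives).\<close>
definition Theta2 :: "((psl2 \<times> psl2) \<Rightarrow>\<^sub>0 int) \<Rightarrow> ((P2 \<times> P2) \<Rightarrow>\<^sub>0 int)" where
  "Theta2 = frag_extend (\<lambda>gh. actC gh dT2)"

definition bdG :: "psl2 \<Rightarrow> (P1 \<Rightarrow>\<^sub>0 int)" where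
  "bdG g = frag_of (act g infty) - frag_of (act g (Some 0))"

definition I_H :: "(((psl2 \<times> psl2) \<Rightarrow>\<^sub>0 int)) set" where
  "I_H = {x. \<forall>C \<in> {lcoset g Gamma_inf | g. True}.
            frag_extend (\<lambda>(\<alpha>,\<beta>). if \<beta> \<in> C then bdG \<alpha> else 0) x = 0}"

definition I_V :: "(((psl2 \<times> psl2) \<Rightarrow>\<^sub>0 int)) set" where
  "I_V = {x. \<forall>C \<in> {lcoset g Gamma_0 | g. True}.
            frag_extend (\<lambda>(\<alpha>,\<beta>). if \<alpha> \<in> C then bdG \<beta> else 0) x = 0}"

definition I_D :: "(((psl2 \<times> psl2) \<Rightarrow>\<^sub>0 int)) set" where
  "I_D = {x. \<forall>g. frag_extend (\<lambda>(\<alpha>,\<beta>). if \<beta> \<cdot>\<^sub>\<Gamma> psl_inv \<alpha> = g then bdG \<alpha> else 0) x = 0}"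

definition J2 :: "(((psl2 \<times> psl2) \<Rightarrow>\<^sub>0 int)) set" where
  "J2 = I_H \<inter> I_V \<inter> I_D"

definition H1gens :: "(((P2 \<times> P2) \<Rightarrow>\<^sub>0 int)) set" where
  "H1gens = {delta2 (frag_of ((a, act g a), (a, act g b), (b, act g b))) | a b g. True}"

end

theory Submission
  imports Defs
begin

text \<open>Two distinct points of P^1 \<times> P^1 lie on at most one line (horizontal, vertical, or the
  graph of an element of \<Gamma>), so a chain whose edges lie on lines is a sum of line cycles exactly
  when, for every line, the boundary of its part on that line vanishes. The three edges of
  (\<alpha>,\<beta>).\<partial>T_2 lie on the vertical line through \<alpha>0, the graph of \<beta>\<alpha>^{-1} and the horizontal
  line through \<beta>\<infinity>; the resulting three families of conditions are I_V, I_D and I_H.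

  For the image, each (\<alpha>,\<beta>).\<partial>T_2 is minus a generator modulo line cycles. Conversely,
  generator triangles and squares over Farey neighbours are images of Theta_2, and since the
  Euclidean algorithm joins any two points of P^1(Q) by a chain of Farey neighbours, adding up
  along such chains yields every generator.\<close>

section \<open>The group structure of PSL_2(Z)\<close>

definition imat_det :: "imat \<Rightarrow> int" where
  "imat_det m = (case m of (a,b,c,d) \<Rightarrow> a*d - b*c)"

definition imat_neg :: "imat \<Rightarrow> imat" where
  "imat_neg m = (case m of (a,b,c,d) \<Rightarrow> (-a,-b,-c,-d))"

lemma imat_det_mult: "imat_det (imat_mult m n) = imat_det m * imat_det n"
  by (cases m; cases n) (simp add: imat_det_def imat_mult_def algebra_simps)

lemma imat_mult_assoc: "imat_mult (imat_mult m n) k = imat_mult m (imat_mult n k)"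
  by (cases m; cases n; cases k) (simp add: imat_mult_def algebra_simps)

lemma imat_mult_neg_left: "imat_mult (imat_neg m) n = imat_neg (imat_mult m n)"
  and imat_mult_neg_right: "imat_mult m (imat_neg n) = imat_neg (imat_mult m n)"
  by (cases m; cases n; simp add: imat_neg_def imat_mult_def algebra_simps)+

lemma Rep_psl2_normal: "psl_normal (Rep_psl2 g)"
  using Rep_psl2 by simp

lemma Rep_psl2_det: "imat_det (Rep_psl2 g) = 1"
  using Rep_psl2_normal[of g] by (cases "Rep_psl2 g") (simp add: psl_normal_def imat_det_def)

lemma Rep_psl_of_normal: "psl_normal m \<Longrightarrow> Rep_psl2 (psl_of m) = m"
  by (cases m) (auto simp: psl_of_def psl_norm_def psl_normal_def Abs_psl2_inverse)

lemma Rep_psl_of: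
  assumes "imat_det m = 1"
  shows "Rep_psl2 (psl_of m) = m \<or> Rep_psl2 (psl_of m) = imat_neg m"
proof -
  obtain a b c d where m: "m = (a,b,c,d)" by (cases m)
  have "a*d - b*c = 1" using assms by (simp add: m imat_det_def)
  then have "c = 0 \<Longrightarrow> d \<noteq> 0" by auto
  then have "psl_normal (psl_norm m)"
    using \<open>a*d - b*c = 1\<close> by (auto simp: m psl_normal_def psl_norm_def)
  then show ?thesis
    by (auto simp: psl_of_def Abs_psl2_inverse m psl_norm_def imat_neg_def)
qed

lemma psl_of_Rep_psl2 [simp]: "psl_of (Rep_psl2 g) = g"
  using Rep_psl_of_normal[OF Rep_psl2_normal] Rep_psl2_inject by blast

lemma psl_of_neg: "imat_det m = 1 \<Longrightarrow> psl_of (imat_neg m) = psl_of m"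
  by (cases m) (auto simp: psl_of_def psl_norm_def imat_neg_def imat_det_def)

lemma imat_neg_neg [simp]: "imat_neg (imat_neg m) = m"
  by (cases m) (simp add: imat_neg_def)

lemma psl_of_mult:
  assumes "imat_det m = 1" "imat_det n = 1"
  shows "psl_of m \<cdot>\<^sub>\<Gamma> psl_of n = psl_of (imat_mult m n)"
  using Rep_psl_of[OF assms(1)] Rep_psl_of[OF assms(2)] assms
  by (auto simp: psl_mult_def imat_mult_neg_left imat_mult_neg_right psl_of_neg imat_det_mult)

lemma psl_mult_assoc: "(g \<cdot>\<^sub>\<Gamma> h) \<cdot>\<^sub>\<Gamma> k = g \<cdot>\<^sub>\<Gamma> (h \<cdot>\<^sub>\<Gamma> k)"
proof -
  have mult_right: "psl_of m \<cdot>\<^sub>\<Gamma> k = psl_of (imat_mult m (Rep_psl2 k))"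
    and mult_left: "g \<cdot>\<^sub>\<Gamma> psl_of m = psl_of (imat_mult (Rep_psl2 g) m)"
    if "imat_det m = 1" for m g k
    using psl_of_mult[OF that Rep_psl2_det, of k] psl_of_mult[OF Rep_psl2_det that, of g] by simp_all
  show ?thesis
    unfolding psl_mult_def[of g h] psl_mult_def[of h k]
    by (simp add: mult_right mult_left imat_det_mult Rep_psl2_det imat_mult_assoc)
qed

lemma Rep_psl_one: "Rep_psl2 psl_one = (1,0,0,1)"
  by (simp add: psl_one_def Rep_psl_of_normal psl_normal_def)

lemma psl_one_mult [simp]: "psl_one \<cdot>\<^sub>\<Gamma> g = g"
  and psl_mult_one [simp]: "g \<cdot>\<^sub>\<Gamma> psl_one = g"
proof -
  have "imat_mult (1,0,0,1) m = m" "imat_mult m (1,0,0,1) = m" for m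
    by (cases m; simp add: imat_mult_def)+
  then show "psl_one \<cdot>\<^sub>\<Gamma> g = g" "g \<cdot>\<^sub>\<Gamma> psl_one = g"
    by (simp_all add: psl_mult_def Rep_psl_one)
qed

lemma psl_inv_mult [simp]: "psl_inv g \<cdot>\<^sub>\<Gamma> g = psl_one"
  and psl_mult_inv [simp]: "g \<cdot>\<^sub>\<Gamma> psl_inv g = psl_one"
proof -
  obtain a b c d where r: "Rep_psl2 g = (a,b,c,d)" by (cases "Rep_psl2 g")
  have det: "a*d - b*c = 1"
    using Rep_psl2_det[of g] by (simp add: r imat_det_def)
  have g: "g = psl_of (a,b,c,d)" by (simp flip: r)
  have i: "psl_inv g = psl_of (d,-b,-c,a)" by (simp add: psl_inv_def r)
  have "psl_of (d,-b,-c,a) \<cdot>\<^sub>\<Gamma> psl_of (a,b,c,d) = psl_one"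
       "psl_of (a,b,c,d) \<cdot>\<^sub>\<Gamma> psl_of (d,-b,-c,a) = psl_one"
    using det by (simp_all add: psl_of_mult imat_det_def imat_mult_def psl_one_def algebra_simps)
  then show "psl_inv g \<cdot>\<^sub>\<Gamma> g = psl_one" "g \<cdot>\<^sub>\<Gamma> psl_inv g = psl_one"
    by (simp_all only: flip: g i)
qed

lemma psl_mult_inv_cancel_left [simp]: "g \<cdot>\<^sub>\<Gamma> (psl_inv g \<cdot>\<^sub>\<Gamma> h) = h"
  by (simp flip: psl_mult_assoc)

lemma psl_inv_unique: "g \<cdot>\<^sub>\<Gamma> h = psl_one \<Longrightarrow> psl_inv g = h"
  by (metis psl_mult_assoc psl_inv_mult psl_one_mult psl_mult_one)

lemma psl_mult_right_cancel: "h \<cdot>\<^sub>\<Gamma> g = k \<cdot>\<^sub>\<Gamma> g \<Longrightarrow> h = k"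
  by (metis psl_mult_assoc psl_mult_inv psl_mult_one)

lemma psl_inv_mult_eq_one: "psl_inv g \<cdot>\<^sub>\<Gamma> h = psl_one \<Longrightarrow> h = g"
  by (metis psl_mult_inv_cancel_left psl_mult_one)

section \<open>The Moebius action on P^1(Q)\<close>

definition mobius :: "imat \<Rightarrow> P1 \<Rightarrow> P1" where
  "mobius m z = (case m of (a,b,c,d) \<Rightarrow>
     (case z of
        None \<Rightarrow> (if c = 0 then None else Some (of_int a / of_int c))
      | Some x \<Rightarrow> (if of_int c * x + of_int d = 0 then None
                   else Some ((of_int a * x + of_int b) / (of_int c * x + of_int d)))))"

lemma act_eq_mobius: "act g = mobius (Rep_psl2 g)"
  by (rule ext) (simp add: act_def mobius_def)

definition hcoords :: "P1 \<Rightarrow> rat \<times> rat" where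
  "hcoords z = (case z of None \<Rightarrow> (1,0) | Some x \<Rightarrow> (x,1))"

definition of_hcoords :: "rat \<times> rat \<Rightarrow> P1" where
  "of_hcoords w = (if snd w = 0 then None else Some (fst w / snd w))"

definition imat_apply :: "imat \<Rightarrow> rat \<times> rat \<Rightarrow> rat \<times> rat" where
  "imat_apply m w = (case m of (a,b,c,d) \<Rightarrow>
     (of_int a * fst w + of_int b * snd w, of_int c * fst w + of_int d * snd w))"

lemma mobius_hcoords: "mobius m z = of_hcoords (imat_apply m (hcoords z))"
  by (cases m; cases z) (auto simp: mobius_def of_hcoords_def imat_apply_def hcoords_def)

lemma of_hcoords_hcoords [simp]: "of_hcoords (hcoords z) = z"
  by (cases z) (auto simp: of_hcoords_def hcoords_def)

lemma hcoords_nonzero: "hcoords z \<noteq> (0,0)"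
  by (cases z) (auto simp: hcoords_def)

lemma hcoords_of_hcoords:
  "w \<noteq> (0,0) \<Longrightarrow> \<exists>t. t \<noteq> 0 \<and> w = (t * fst (hcoords (of_hcoords w)), t * snd (hcoords (of_hcoords w)))"
  by (cases w) (auto simp: hcoords_def of_hcoords_def)

lemma of_hcoords_scale: "t \<noteq> 0 \<Longrightarrow> of_hcoords (t * u, t * v) = of_hcoords (u, v)"
  by (auto simp: of_hcoords_def)

lemma imat_apply_scale:
  "imat_apply m (t * u, t * v) = (t * fst (imat_apply m (u,v)), t * snd (imat_apply m (u,v)))"
  by (cases m) (simp add: imat_apply_def algebra_simps)

lemma imat_apply_mult: "imat_apply (imat_mult m n) w = imat_apply m (imat_apply n w)"
  by (cases m; cases n; cases w) (simp add: imat_apply_def imat_mult_def algebra_simps)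

lemma imat_apply_nonzero:
  assumes "imat_det m = 1" "w \<noteq> (0,0)"
  shows "imat_apply m w \<noteq> (0,0)"
proof
  assume zero: "imat_apply m w = (0,0)"
  obtain a b c d where m: "m = (a,b,c,d)" by (cases m)
  obtain u v where w: "w = (u,v)" by (cases w)
  have det: "of_int a * of_int d - of_int b * of_int c = (1::rat)"
    using assms(1) by (simp add: m imat_det_def flip: of_int_mult of_int_diff)
  \<comment> \<open>Cramer's rule: the adjugate recovers w from m w.\<close>
  have "u = of_int d * (of_int a * u + of_int b * v) - of_int b * (of_int c * u + of_int d * v)"
       "v = of_int a * (of_int c * u + of_int d * v) - of_int c * (of_int a * u + of_int b * v)"
    by (simp_all add: algebra_simps flip: det[THEN arg_cong[of _ _ "\<lambda>t. t * u"], simplified]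
        det[THEN arg_cong[of _ _ "\<lambda>t. t * v"], simplified])
  with zero assms(2) show False by (simp add: m w imat_apply_def)
qed

lemma mobius_mult:
  assumes "imat_det n = 1"
  shows "mobius (imat_mult m n) z = mobius m (mobius n z)"
proof -
  let ?w = "imat_apply n (hcoords z)"
  obtain t where t: "t \<noteq> 0" "?w = (t * fst (hcoords (of_hcoords ?w)), t * snd (hcoords (of_hcoords ?w)))"
    using hcoords_of_hcoords imat_apply_nonzero[OF assms hcoords_nonzero] by blast
  have "mobius (imat_mult m n) z = of_hcoords (imat_apply m ?w)"
    by (simp add: mobius_hcoords imat_apply_mult)
  also have "\<dots> = of_hcoords (imat_apply m (hcoords (of_hcoords ?w)))"
    by (subst t(2)) (simp add: imat_apply_scale of_hcoords_scale t(1))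
  finally show ?thesis by (simp add: mobius_hcoords)
qed

lemma mobius_neg: "mobius (imat_neg m) = mobius m"
  by (rule ext, cases m) (auto simp: mobius_hcoords imat_apply_def imat_neg_def of_hcoords_def field_simps)

lemma act_psl_of: "imat_det m = 1 \<Longrightarrow> act (psl_of m) = mobius m"
  using Rep_psl_of[of m] by (auto simp: act_eq_mobius mobius_neg)

lemma act_mult: "act (g \<cdot>\<^sub>\<Gamma> h) z = act g (act h z)"
proof -
  have "imat_det (imat_mult (Rep_psl2 g) (Rep_psl2 h)) = 1"
    by (simp add: imat_det_mult Rep_psl2_det)
  then have "act (g \<cdot>\<^sub>\<Gamma> h) z = mobius (imat_mult (Rep_psl2 g) (Rep_psl2 h)) z"
    unfolding psl_mult_def by (simp only: act_psl_of)
  then show ?thesis by (simp add: mobius_mult Rep_psl2_det act_eq_mobius)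
qed

lemma act_one [simp]: "act psl_one z = z"
  by (cases z) (simp_all add: act_eq_mobius Rep_psl_one mobius_def)

lemma act_inv_act [simp]: "act (psl_inv g) (act g z) = z"
  and act_act_inv [simp]: "act g (act (psl_inv g) z) = z"
  by (simp_all flip: act_mult)

lemma act_inject: "act g z = act g w \<longleftrightarrow> z = w"
  by (metis act_inv_act)

section \<open>Transitivity, stabilizers and cosets\<close>

lemma act_psl_of_tuple: "a*d - b*c = 1 \<Longrightarrow> act (psl_of (a,b,c,d)) = mobius (a,b,c,d)"
  by (simp add: act_psl_of imat_det_def)

lemma act_S_infty [simp]: "act S_mat None = Some 0"
  and act_S_0 [simp]: "act S_mat (Some 0) = None"
  and act_S_Some: "x \<noteq> 0 \<Longrightarrow> act S_mat (Some x) = Some (-1 / x)"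
  by (simp_all add: S_mat_def act_psl_of_tuple mobius_def)

definition T_pow :: "int \<Rightarrow> psl2" where
  "T_pow n = psl_of (1,n,0,1)"

definition US_pow :: "int \<Rightarrow> psl2" where
  "US_pow n = psl_of (1,0,n,1)"

lemma act_T_pow_infty [simp]: "act (T_pow n) None = None"
  and act_T_pow_Some [simp]: "act (T_pow n) (Some x) = Some (x + of_int n)"
  and act_US_pow_0 [simp]: "act (US_pow n) (Some 0) = Some 0"
  by (simp_all add: T_pow_def US_pow_def act_psl_of_tuple mobius_def)

text \<open>In lowest terms p/q and r/s, these are the Farey neighbours: ps - qr = \<plusminus>1.\<close>

definition unimodular :: "P1 \<Rightarrow> P1 \<Rightarrow> bool" where
  "unimodular a b \<longleftrightarrow> (\<exists>\<alpha>. act \<alpha> None = a \<and> act \<alpha> (Some 0) = b)"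

lemma unimodular_infty_0: "unimodular None (Some 0)"
  unfolding unimodular_def by (rule exI[of _ psl_one]) simp

lemma unimodular_act: "unimodular a b \<Longrightarrow> unimodular (act g a) (act g b)"
  unfolding unimodular_def by (metis act_mult)

lemma unimodular_sym: "unimodular a b \<Longrightarrow> unimodular b a"
  unfolding unimodular_def by (metis act_mult act_S_infty act_S_0)

lemma unimodular_chain_act: "unimodular\<^sup>*\<^sup>* a b \<Longrightarrow> unimodular\<^sup>*\<^sup>* (act g a) (act g b)"
  by (induction rule: rtranclp_induct) (auto intro: rtranclp.rtrancl_into_rtrancl unimodular_act)

lemma unimodular_chain_from_infty_Some:
  "q > 0 \<Longrightarrow> unimodular\<^sup>*\<^sup>* None (Some (of_int p / of_int (int q)))"
proof (induction q arbitrary: p rule: less_induct)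
  case (less q)
  define n r where "n = p div int q" and "r = p mod int q"
  have p: "p = n * int q + r" and r: "0 \<le> r" "r < int q"
    using less.prems by (simp_all add: n_def r_def)
  have "unimodular\<^sup>*\<^sup>* None (Some (of_int r / of_int (int q)))"
  proof (cases "r = 0")
    case True then show ?thesis using unimodular_infty_0 by simp
  next
    case False
    \<comment> \<open>Euclid: r/q = S(-q/r), and r < q.\<close>
    have "unimodular\<^sup>*\<^sup>* None (Some (of_int (- int q) / of_int (int (nat r))))"
      by (rule less.IH) (use r False in auto)
    then have "unimodular\<^sup>*\<^sup>* (act S_mat None) (act S_mat (Some (of_int (- int q) / of_int r)))"
      using r by (intro unimodular_chain_act) simp
    moreover have "act S_mat (Some (of_int (- int q) / of_int r)) = Some (of_int r / of_int (int q))"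
      using False less.prems by (simp add: act_S_Some)
    ultimately show ?thesis
      using unimodular_infty_0 by (metis act_S_infty converse_rtranclp_into_rtranclp)
  qed
  from unimodular_chain_act[OF this, of "T_pow n"] show ?case
    using less.prems by (simp add: p field_simps)
qed

lemma unimodular_chain_from_infty: "unimodular\<^sup>*\<^sup>* None z"
proof (cases z)
  case (Some x)
  obtain p q where pq: "quotient_of x = (p,q)" by fastforce
  with quotient_of_denom_pos[OF pq] quotient_of_div[OF pq]
    unimodular_chain_from_infty_Some[of "nat q" p]
  show ?thesis by (simp add: Some)
qed simp

lemma unimodular_chain: "unimodular\<^sup>*\<^sup>* a b"
proof -
  have "unimodular\<^sup>*\<^sup>* a None"
    using unimodular_chain_from_infty[of a]
    by (induction rule: rtranclp_induct) (auto intro: converse_rtranclp_into_rtranclp unimodular_sym)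
  then show ?thesis using unimodular_chain_from_infty rtranclp_trans by metis
qed

lemma act_transitive_infty: "\<exists>g. act g None = z"
  using unimodular_chain_from_infty[of z]
proof (cases rule: rtranclp.cases)
  case rtrancl_refl then show ?thesis by (metis act_one)
next
  case (rtrancl_into_rtrancl y)
  then show ?thesis by (metis unimodular_def act_mult act_S_infty)
qed

lemma act_transitive_0: "\<exists>g. act g (Some 0) = z"
  using act_transitive_infty[of z] by (metis act_mult act_S_0)

lemma all_act_infty_iff: "(\<forall>g. P (act g None)) \<longleftrightarrow> (\<forall>y. P y)"
proof (intro iffI allI)
  fix y assume all: "\<forall>g. P (act g None)"
  obtain g where "act g None = y" using act_transitive_infty by blast
  with all[rule_format, of g] show "P y" by simp
qed simp

lemma all_act_0_iff: "(\<forall>g. P (act g (Some 0))) \<longleftrightarrow> (\<forall>y. P y)"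
proof (intro iffI allI)
  fix y assume all: "\<forall>g. P (act g (Some 0))"
  obtain g where "act g (Some 0) = y" using act_transitive_0 by blast
  with all[rule_format, of g] show "P y" by simp
qed simp

lemma stabilizer_infty: "act k None = None \<Longrightarrow> \<exists>n. k = T_pow n"
proof -
  assume fixed: "act k None = None"
  obtain a b c d where r: "Rep_psl2 k = (a,b,c,d)" by (cases "Rep_psl2 k")
  have "a*d - b*c = 1" "c > 0 \<or> (c = 0 \<and> d > 0)"
    using Rep_psl2_normal[of k] by (auto simp: r psl_normal_def)
  moreover have "c = 0" using fixed by (simp add: act_eq_mobius r mobius_def split: if_splits)
  ultimately have "a = 1" "d = 1" "c = 0" using zmult_eq_1_iff[of a d] by auto
  moreover have "k = psl_of (a,b,c,d)" by (simp flip: r)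
  ultimately have "k = T_pow b" by (simp add: T_pow_def)
  then show ?thesis ..
qed

lemma stabilizer_0: "act k (Some 0) = Some 0 \<Longrightarrow> \<exists>n. k = US_pow n"
proof -
  assume fixed: "act k (Some 0) = Some 0"
  obtain a b c d where r: "Rep_psl2 k = (a,b,c,d)" by (cases "Rep_psl2 k")
  have "a*d - b*c = 1" using Rep_psl2_normal[of k] by (simp add: r psl_normal_def)
  moreover have "d \<noteq> 0" "b = 0" using fixed by (auto simp: act_eq_mobius r mobius_def split: if_splits)
  ultimately have "(a = 1 \<and> d = 1) \<or> (a = -1 \<and> d = -1)" "b = 0"
    using zmult_eq_1_iff[of a d] by auto
  moreover have "k = psl_of (a,b,c,d)" by (simp flip: r)
  ultimately have "k = US_pow c \<or> k = US_pow (-c)"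
    using psl_of_neg[of "(1,0,-c,1)"] by (auto simp: US_pow_def imat_neg_def imat_det_def)
  then show ?thesis by blast
qed

lemma psl_npow_T: "psl_npow T_mat n = T_pow (int n)"
  and psl_npow_inv_T: "psl_npow (psl_inv T_mat) n = T_pow (- int n)"
  and psl_npow_US: "psl_npow (U_mat \<cdot>\<^sub>\<Gamma> S_mat) n = US_pow (int n)"
  and psl_npow_inv_US: "psl_npow (psl_inv (U_mat \<cdot>\<^sub>\<Gamma> S_mat)) n = US_pow (- int n)"
proof -
  have T: "T_mat = T_pow 1" by (simp add: T_mat_def T_pow_def)
  have US: "U_mat \<cdot>\<^sub>\<Gamma> S_mat = US_pow 1"
    by (simp add: U_mat_def S_mat_def US_pow_def psl_of_mult imat_det_def imat_mult_def)
  have mult: "T_pow m \<cdot>\<^sub>\<Gamma> T_pow n = T_pow (m + n)" "US_pow m \<cdot>\<^sub>\<Gamma> US_pow n = US_pow (m + n)" for m n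
    by (simp_all add: T_pow_def US_pow_def psl_of_mult imat_det_def imat_mult_def add.commute)
  have one: "T_pow 0 = psl_one" "US_pow 0 = psl_one"
    by (simp_all add: T_pow_def US_pow_def psl_one_def)
  have inv: "psl_inv (T_pow m) = T_pow (-m)" "psl_inv (US_pow m) = US_pow (-m)" for m
    by (simp_all add: psl_inv_unique mult one)
  show "psl_npow T_mat n = T_pow (int n)" "psl_npow (psl_inv T_mat) n = T_pow (- int n)"
    "psl_npow (U_mat \<cdot>\<^sub>\<Gamma> S_mat) n = US_pow (int n)"
    "psl_npow (psl_inv (U_mat \<cdot>\<^sub>\<Gamma> S_mat)) n = US_pow (- int n)"
    by (induction n) (simp_all add: T US inv mult one algebra_simps)
qed

lemma Gamma_inf_eq: "Gamma_inf = range T_pow"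
  and Gamma_0_eq: "Gamma_0 = range US_pow"
  by (auto simp: Gamma_inf_def Gamma_0_def psl_zpow_def psl_npow_T psl_npow_inv_T
      psl_npow_US psl_npow_inv_US)

lemma lcoset_Gamma_inf_iff: "\<beta> \<in> lcoset g Gamma_inf \<longleftrightarrow> act \<beta> None = act g None"
proof
  assume "act \<beta> None = act g None"
  then obtain n where "psl_inv g \<cdot>\<^sub>\<Gamma> \<beta> = T_pow n"
    using stabilizer_infty[of "psl_inv g \<cdot>\<^sub>\<Gamma> \<beta>"] by (auto simp: act_mult)
  then have "\<beta> = g \<cdot>\<^sub>\<Gamma> T_pow n" by (metis psl_mult_inv_cancel_left)
  then show "\<beta> \<in> lcoset g Gamma_inf" by (auto simp: lcoset_def Gamma_inf_eq)
qed (auto simp: lcoset_def Gamma_inf_eq act_mult)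

lemma lcoset_Gamma_0_iff: "\<alpha> \<in> lcoset g Gamma_0 \<longleftrightarrow> act \<alpha> (Some 0) = act g (Some 0)"
proof
  assume "act \<alpha> (Some 0) = act g (Some 0)"
  then obtain n where "psl_inv g \<cdot>\<^sub>\<Gamma> \<alpha> = US_pow n"
    using stabilizer_0[of "psl_inv g \<cdot>\<^sub>\<Gamma> \<alpha>"] by (auto simp: act_mult)
  then have "\<alpha> = g \<cdot>\<^sub>\<Gamma> US_pow n" by (metis psl_mult_inv_cancel_left)
  then show "\<alpha> \<in> lcoset g Gamma_0" by (auto simp: lcoset_def Gamma_0_eq)
qed (auto simp: lcoset_def Gamma_0_eq act_mult)

lemma act_eq_on_two_points:
  assumes "act g z0 = act h z0" "act g z1 = act h z1" "z0 \<noteq> z1"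
  shows "g = h"
proof -
  obtain \<gamma> where \<gamma>: "act \<gamma> None = z0" using act_transitive_infty by blast
  define k where "k = psl_inv (g \<cdot>\<^sub>\<Gamma> \<gamma>) \<cdot>\<^sub>\<Gamma> (h \<cdot>\<^sub>\<Gamma> \<gamma>)"
  have fixed_point: "act k z = z" if "act g (act \<gamma> z) = act h (act \<gamma> z)" for z
    using that by (simp add: k_def act_mult) (metis act_inv_act act_mult)
  obtain x where x: "act (psl_inv \<gamma>) z1 = Some x"
    using assms(3) \<gamma> by (metis act_act_inv not_Some_eq)
  obtain n where "k = T_pow n" using stabilizer_infty fixed_point assms(1) \<gamma> by blast
  moreover have "act k (Some x) = Some x" using fixed_point assms(2) x by (metis act_act_inv)
  ultimately have "k = T_pow 0" by simp
  then have "h \<cdot>\<^sub>\<Gamma> \<gamma> = g \<cdot>\<^sub>\<Gamma> \<gamma>"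
    unfolding k_def by (metis psl_inv_mult_eq_one T_pow_def psl_one_def)
  then show ?thesis by (metis psl_mult_right_cancel)
qed

lemma zspan_neg: "x \<in> zspan A \<Longrightarrow> - x \<in> zspan A"
  using zspan_diff[OF zspan_zero] by fastforce

lemma zspan_add: "x \<in> zspan A \<Longrightarrow> y \<in> zspan A \<Longrightarrow> x + y \<in> zspan A"
  using zspan_diff[OF _ zspan_neg] by fastforce

lemma zspan_sum: "(\<And>i. i \<in> I \<Longrightarrow> f i \<in> zspan A) \<Longrightarrow> sum f I \<in> zspan A"
  by (induction I rule: infinite_finite_induct) (simp_all add: zspan_zero zspan_add)

lemma zspan_frag_extend: "(\<And>k. f k \<in> zspan A) \<Longrightarrow> frag_extend f c \<in> zspan A"
  unfolding frag_extend_def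
  by (intro zspan_sum frag_closure_minus_cmul[where P="\<lambda>x. x \<in> zspan A"]) (auto intro: zspan.intros)

lemma frag_extend_fun_add: "frag_extend (\<lambda>k. f k + g k) c = frag_extend f c + frag_extend g c"
  by (simp add: frag_extend_def frag_cmul_distrib2 sum.distrib)

lemma frag_extend_fun_minus: "frag_extend (\<lambda>k. - f k) c = - frag_extend f c"
proof -
  have "frag_extend (\<lambda>k. - f k) c + frag_extend f c = 0"
    by (simp add: frag_extend_eq_0 flip: frag_extend_fun_add)
  then show ?thesis by (simp add: eq_neg_iff_add_eq_0)
qed

lemma frag_extend_fun_sum: "frag_extend (\<lambda>k. \<Sum>y\<in>Y. g y k) c = (\<Sum>y\<in>Y. frag_extend (g y) c)"
  by (induction Y rule: infinite_finite_induct) (simp_all add: frag_extend_fun_add frag_extend_eq_0)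

lemma frag_extend_frag_extend:
  "frag_extend h (frag_extend g c) = frag_extend (\<lambda>k. frag_extend h (g k)) c"
  using subset_UNIV by (induction c rule: frag_induction) (auto simp: frag_extend_diff)

lemma frag_extend_split:
  assumes "finite Y" "\<phi> ` Poly_Mapping.keys c \<subseteq> Y"
  shows "frag_extend f c = (\<Sum>y\<in>Y. frag_extend (\<lambda>k. if \<phi> k = y then f k else 0) c)"
proof -
  have "frag_extend f c = frag_extend (\<lambda>k. \<Sum>y\<in>Y. if \<phi> k = y then f k else 0) c"
    using assms by (intro frag_extend_eq) (auto simp: sum.delta)
  also have "\<dots> = (\<Sum>y\<in>Y. frag_extend (\<lambda>k. if \<phi> k = y then f k else 0) c)"
    by (rule frag_extend_fun_sum)
  finally show ?thesis .
qed

lemma push2_frag_of [simp]: "push2 f (frag_of (a,b)) = frag_of (f a, f b)"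
  and push2_add: "push2 f (c + d) = push2 f c + push2 f d"
  and push2_diff: "push2 f (c - d) = push2 f c - push2 f d"
  by (simp_all add: push2_def frag_extend_add frag_extend_diff)

lemma delta1_0 [simp]: "delta1 0 = 0"
  and delta1_frag_of [simp]: "delta1 (frag_of (a,b)) = frag_of b - frag_of a"
  and delta1_add: "delta1 (c + d) = delta1 c + delta1 d"
  and delta1_diff: "delta1 (c - d) = delta1 c - delta1 d"
  by (simp_all add: delta1_def frag_extend_add frag_extend_diff)

lemma delta2_frag_of [simp]: "delta2 (frag_of (a,b,c)) = frag_of (b,c) - frag_of (a,c) + frag_of (a,b)"
  by (simp add: delta2_def)

abbreviation edge :: "P2 \<Rightarrow> P2 \<Rightarrow> (P2 \<times> P2) \<Rightarrow>\<^sub>0 int" where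
  "edge p q \<equiv> frag_of (p,q)"

section \<open>Lines in P^1 \<times> P^1\<close>

text \<open>The lines of P_2 are exactly the images of the maps phi j g.\<close>

datatype line = Hor P1 | Ver P1 | Graph psl2

lemma all_line_iff:
  "(\<forall>L. P L) \<longleftrightarrow> (\<forall>y. P (Hor y)) \<and> (\<forall>x. P (Ver x)) \<and> (\<forall>g. P (Graph g))"
proof (intro iffI allI)
  fix L assume "(\<forall>y. P (Hor y)) \<and> (\<forall>x. P (Ver x)) \<and> (\<forall>g. P (Graph g))"
  then show "P L" by (cases L) auto
qed auto

fun on_line :: "line \<Rightarrow> P2 \<Rightarrow> bool" where
  "on_line (Hor y) p \<longleftrightarrow> snd p = y"
| "on_line (Ver x) p \<longleftrightarrow> fst p = x"
| "on_line (Graph g) p \<longleftrightarrow> snd p = act g (fst p)"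

fun line_coord :: "line \<Rightarrow> P2 \<Rightarrow> P1" where
  "line_coord (Hor y) p = fst p"
| "line_coord (Ver x) p = snd p"
| "line_coord (Graph g) p = fst p"

fun line_emb :: "line \<Rightarrow> P1 \<Rightarrow> P2" where
  "line_emb (Hor y) z = (z,y)"
| "line_emb (Ver x) z = (x,z)"
| "line_emb (Graph g) z = (z, act g z)"

lemma on_line_emb [simp]: "on_line L (line_emb L z)"
  by (cases L) auto

lemma line_coord_emb [simp]: "line_coord L (line_emb L z) = z"
  by (cases L) auto

lemma line_emb_coord: "on_line L p \<Longrightarrow> line_emb L (line_coord L p) = p"
  by (cases L; cases p) auto

lemma line_unique:
  assumes "p \<noteq> q" "on_line L p" "on_line L q" "on_line L' p" "on_line L' q"
  shows "L = L'"
proof -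
  have graph_eq: "g = h" if "on_line (Graph g) p" "on_line (Graph g) q"
    "on_line (Graph h) p" "on_line (Graph h) q" for g h
  proof (rule act_eq_on_two_points)
    show "fst p \<noteq> fst q" using that assms(1) by (auto simp: prod_eq_iff)
  qed (use that in auto)
  show ?thesis
    by (cases L; cases L') (use assms graph_eq in \<open>auto simp: prod_eq_iff, (metis act_inject)+\<close>)
qed

lemma phi_eq_line_emb:
  "phi 0 g = line_emb (Ver (act g None))"
  "phi 1 g = line_emb (Graph g)"
  "phi 2 g = line_emb (Hor (act g (Some 0)))"
  by (auto simp: phi_def infty_def)

lemma Bsub_0: "0 \<in> Bsub"
  and Bsub_add: "c \<in> Bsub \<Longrightarrow> d \<in> Bsub \<Longrightarrow> c + d \<in> Bsub"
  and Bsub_diff: "c \<in> Bsub \<Longrightarrow> d \<in> Bsub \<Longrightarrow> c - d \<in> Bsub"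
  and Bsub_sum: "(\<And>i. i \<in> I \<Longrightarrow> f i \<in> Bsub) \<Longrightarrow> sum f I \<in> Bsub"
  and Bsub_frag_extend: "(\<And>k. f k \<in> Bsub) \<Longrightarrow> frag_extend f x \<in> Bsub"
  unfolding Bsub_def
  by (fact zspan_zero zspan_add zspan_diff zspan_sum zspan_frag_extend)+

lemma line_cycle_in_Bsub:
  assumes "delta1 c = 0"
  shows "push2 (line_emb L) c \<in> Bsub"
proof -
  obtain j g where j: "j \<in> {0,1,2}" and L: "line_emb L = phi j g"
  proof (cases L)
    case (Hor y)
    obtain g where "act g (Some 0) = y" using act_transitive_0 by blast
    then show ?thesis using that[of 2 g] Hor by (simp add: phi_eq_line_emb)
  next
    case (Ver x)
    obtain g where "act g None = x" using act_transitive_infty by blast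
    then show ?thesis using that[of 0 g] Ver by (simp add: phi_eq_line_emb)
  next
    case (Graph g)
    show ?thesis by (rule that[of 1 g]) (auto simp: Graph phi_def)
  qed
  have "push2 (phi j g) c \<in> (\<Union>j\<in>{0,1,2}. \<Union>g. push2 (phi j g) ` cycles0)"
    using j assms unfolding cycles0_def by (intro UN_I imageI) auto
  then show ?thesis unfolding L Bsub_def by (rule zspan_gen)
qed

lemma triangle_on_line_in_Bsub:
  assumes "on_line L p" "on_line L q" "on_line L r"
  shows "edge p q + edge q r - edge p r \<in> Bsub"
proof -
  let ?c = "frag_of (line_coord L p, line_coord L q) + frag_of (line_coord L q, line_coord L r)
    - frag_of (line_coord L p, line_coord L r)"
  have "push2 (line_emb L) ?c \<in> Bsub"
    by (rule line_cycle_in_Bsub) (simp add: delta1_add delta1_diff)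
  then show ?thesis using assms by (simp add: push2_add push2_diff line_emb_coord)
qed

lemma degenerate_edge_in_Bsub: "edge p p \<in> Bsub"
  using triangle_on_line_in_Bsub[of "Ver (fst p)" p p p] by simp

lemma reversed_edge_on_line_in_Bsub:
  assumes "on_line L p" "on_line L q"
  shows "edge p q + edge q p \<in> Bsub"
  using Bsub_add[OF triangle_on_line_in_Bsub[OF assms(1,2,1)] degenerate_edge_in_Bsub[of p]]
  by simp

section \<open>Residues along lines\<close>

definition residue :: "line \<Rightarrow> ((P2 \<times> P2) \<Rightarrow>\<^sub>0 int) \<Rightarrow> (P1 \<Rightarrow>\<^sub>0 int)" where
  "residue L = frag_extend (\<lambda>(p,q).
     if on_line L p \<and> on_line L q then frag_of (line_coord L q) - frag_of (line_coord L p) else 0)"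

lemma residue_add: "residue L (c + d) = residue L c + residue L d"
  and residue_diff: "residue L (c - d) = residue L c - residue L d"
  by (simp_all add: residue_def frag_extend_add frag_extend_diff)

lemma residue_frag_extend: "residue L (frag_extend f c) = frag_extend (\<lambda>k. residue L (f k)) c"
  unfolding residue_def by (rule frag_extend_frag_extend)

lemma residue_edge:
  assumes "on_line L0 p" "on_line L0 q"
  shows "residue L (edge p q) =
    (if L = L0 then frag_of (line_coord L0 q) - frag_of (line_coord L0 p) else 0)"
  using assms line_unique[of p q L L0] by (auto simp: residue_def)

lemma residue_Bsub: "c \<in> Bsub \<Longrightarrow> residue L c = 0"
  unfolding Bsub_def
proof (induction rule: zspan.induct)
  case (zspan_gen a)
  then obtain j g c0 where j: "j \<in> {0,1,2::nat}" and a: "a = push2 (phi j g) c0"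
    and c0: "delta1 c0 = 0"
    by (auto simp: cycles0_def)
  obtain L0 where L0: "phi j g = line_emb L0" using j phi_eq_line_emb by blast
  have "residue L a = frag_extend (\<lambda>(z0,z1). if L = L0 then frag_of z1 - frag_of z0 else 0) c0"
    unfolding a L0 push2_def residue_frag_extend
    by (rule frag_extend_eq) (auto simp: residue_edge[OF on_line_emb on_line_emb])
  also have "\<dots> = (if L = L0 then delta1 c0 else 0)"
    by (cases "L = L0") (simp_all add: delta1_def split_def frag_extend_eq_0)
  finally show ?case using c0 by simp
qed (simp_all add: residue_def frag_extend_diff)

lemma line_part_in_Bsub:
  assumes on_lines: "\<And>k. k \<in> Poly_Mapping.keys c \<Longrightarrow> on_line (line_of k) (fst k) \<and> on_line (line_of k) (snd k)"
    and residue: "residue L c = 0"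
  shows "frag_extend (\<lambda>k. if line_of k = L then frag_of k else 0) c \<in> Bsub"
proof -
  define d where "d = frag_extend (\<lambda>k.
    if line_of k = L then frag_of (line_coord L (fst k), line_coord L (snd k)) else 0) c"
  have "delta1 d = frag_extend (\<lambda>k.
    if line_of k = L then frag_of (line_coord L (snd k)) - frag_of (line_coord L (fst k)) else 0) c"
    unfolding d_def delta1_def frag_extend_frag_extend
    by (intro frag_extend_eq) (simp flip: delta1_def)
  also have "\<dots> = residue L c"
    unfolding residue_def
  proof (intro frag_extend_eq)
    fix k assume "k \<in> Poly_Mapping.keys c"
    then show "(if line_of k = L then frag_of (line_coord L (snd k)) - frag_of (line_coord L (fst k)) else 0)
      = (case k of (p,q) \<Rightarrow> if on_line L p \<and> on_line L q
           then frag_of (line_coord L q) - frag_of (line_coord L p) else 0)"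
      using on_lines line_unique[of "fst k" "snd k" L "line_of k"]
      by (cases k; cases "fst k = snd k") auto
  qed
  finally have "push2 (line_emb L) d \<in> Bsub" using residue line_cycle_in_Bsub by simp
  moreover have "push2 (line_emb L) d = frag_extend (\<lambda>k. if line_of k = L then frag_of k else 0) c"
    unfolding d_def push2_def frag_extend_frag_extend
    using on_lines by (intro frag_extend_eq) (auto simp: line_emb_coord)
  ultimately show ?thesis by simp
qed

lemma Bsub_iff_residues:
  assumes on_lines: "\<And>p q. (p,q) \<in> Poly_Mapping.keys c \<Longrightarrow> \<exists>L. on_line L p \<and> on_line L q"
  shows "c \<in> Bsub \<longleftrightarrow> (\<forall>L. residue L c = 0)"
proof (intro iffI allI residue_Bsub)
  assume residues: "\<forall>L. residue L c = 0"
  define line_of where "line_of k = (SOME L. on_line L (fst k) \<and> on_line L (snd k))" for k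
  have line_of: "on_line (line_of k) (fst k) \<and> on_line (line_of k) (snd k)"
    if "k \<in> Poly_Mapping.keys c" for k
    unfolding line_of_def using on_lines[of "fst k" "snd k"] that by - (rule someI_ex, simp)
  have "c = (\<Sum>L\<in>line_of ` Poly_Mapping.keys c.
      frag_extend (\<lambda>k. if line_of k = L then frag_of k else 0) c)"
    by (subst frag_expansion) (rule frag_extend_split, simp_all)
  also have "\<dots> \<in> Bsub"
    using line_part_in_Bsub[OF line_of] residues by (intro Bsub_sum) simp
  finally show "c \<in> Bsub" .
qed

section \<open>The kernel of Theta_2\<close>

lemma Theta2_frag_of: "Theta2 (frag_of (\<alpha>,\<beta>)) =
    edge (act \<alpha> (Some 0), act \<beta> None) (act \<alpha> (Some 0), act \<beta> (Some 0))
  - edge (act \<alpha> None, act \<beta> None) (act \<alpha> (Some 0), act \<beta> (Some 0))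
  + edge (act \<alpha> None, act \<beta> None) (act \<alpha> (Some 0), act \<beta> None)"
  by (simp add: Theta2_def actC_def dT2_def push2_add push2_diff actP2_def infty_def)

lemma Theta2_0 [simp]: "Theta2 0 = 0"
  and Theta2_minus: "Theta2 (- x) = - Theta2 x"
  and Theta2_diff: "Theta2 (x - y) = Theta2 x - Theta2 y"
  by (simp_all add: Theta2_def frag_extend_minus frag_extend_diff)

lemma act_graph: "act (\<beta> \<cdot>\<^sub>\<Gamma> psl_inv \<alpha>) (act \<alpha> z) = act \<beta> z"
  by (simp add: act_mult)

lemma Theta2_frag_of_on_lines:
  fixes \<alpha> \<beta> :: psl2
  defines "V \<equiv> Ver (act \<alpha> (Some 0))" and "D \<equiv> Graph (\<beta> \<cdot>\<^sub>\<Gamma> psl_inv \<alpha>)" and "H \<equiv> Hor (act \<beta> None)"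
  shows "on_line V (act \<alpha> (Some 0), act \<beta> None)" "on_line V (act \<alpha> (Some 0), act \<beta> (Some 0))"
    "on_line D (act \<alpha> None, act \<beta> None)" "on_line D (act \<alpha> (Some 0), act \<beta> (Some 0))"
    "on_line H (act \<alpha> None, act \<beta> None)" "on_line H (act \<alpha> (Some 0), act \<beta> None)"
  by (simp_all add: V_def D_def H_def act_graph)

lemma Theta2_edges_on_lines:
  assumes "(p,q) \<in> Poly_Mapping.keys (Theta2 x)"
  shows "\<exists>L. on_line L p \<and> on_line L q"
proof -
  have "Poly_Mapping.keys (Theta2 x) \<subseteq> (\<Union>k\<in>Poly_Mapping.keys x. Poly_Mapping.keys (Theta2 (frag_of k)))"
    using keys_frag_extend[of "\<lambda>k. actC k dT2" x] by (simp add: Theta2_def)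
  with assms obtain \<alpha> \<beta> where "(p,q) \<in> Poly_Mapping.keys (Theta2 (frag_of (\<alpha>,\<beta>)))"
    by auto
  moreover have "Poly_Mapping.keys (e1 - e2 + e3) \<subseteq> Poly_Mapping.keys e1 \<union> Poly_Mapping.keys e2 \<union> Poly_Mapping.keys e3"
    for e1 e2 e3 :: "(P2 \<times> P2) \<Rightarrow>\<^sub>0 int"
    using keys_add[of "e1 - e2" e3] keys_diff[of e1 e2] by auto
  ultimately consider
      "p = (act \<alpha> (Some 0), act \<beta> None)" "q = (act \<alpha> (Some 0), act \<beta> (Some 0))"
    | "p = (act \<alpha> None, act \<beta> None)" "q = (act \<alpha> (Some 0), act \<beta> (Some 0))"
    | "p = (act \<alpha> None, act \<beta> None)" "q = (act \<alpha> (Some 0), act \<beta> None)"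
    unfolding Theta2_frag_of by (force simp: keys_frag_of)
  then show ?thesis
  proof cases
    case 1 then show ?thesis using Theta2_frag_of_on_lines(1,2) by blast
  next
    case 2 then show ?thesis using Theta2_frag_of_on_lines(3,4) by blast
  next
    case 3 then show ?thesis using Theta2_frag_of_on_lines(5,6) by blast
  qed
qed

lemma residue_Theta2_frag_of: "residue L (Theta2 (frag_of (\<alpha>,\<beta>))) =
    (if L = Ver (act \<alpha> (Some 0)) then - bdG \<beta> else 0)
  + (if L = Graph (\<beta> \<cdot>\<^sub>\<Gamma> psl_inv \<alpha>) then bdG \<alpha> else 0)
  - (if L = Hor (act \<beta> None) then bdG \<alpha> else 0)"
  by (simp add: Theta2_frag_of residue_add residue_diff bdG_def infty_def
      residue_edge[OF Theta2_frag_of_on_lines(1,2)] residue_edge[OF Theta2_frag_of_on_lines(3,4)]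
      residue_edge[OF Theta2_frag_of_on_lines(5,6)])

lemma residue_Theta2: "residue L (Theta2 x) = frag_extend (\<lambda>k. residue L (Theta2 (frag_of k))) x"
  by (simp add: Theta2_def residue_frag_extend)

lemma residue_Hor_Theta2:
  "residue (Hor y) (Theta2 x) = - frag_extend (\<lambda>(\<alpha>,\<beta>). if act \<beta> None = y then bdG \<alpha> else 0) x"
  unfolding frag_extend_fun_minus[symmetric]
  by (subst residue_Theta2, rule frag_extend_eq) (auto simp: residue_Theta2_frag_of)

lemma residue_Ver_Theta2:
  "residue (Ver y) (Theta2 x) = - frag_extend (\<lambda>(\<alpha>,\<beta>). if act \<alpha> (Some 0) = y then bdG \<beta> else 0) x"
  unfolding frag_extend_fun_minus[symmetric]
  by (subst residue_Theta2, rule frag_extend_eq) (auto simp: residue_Theta2_frag_of)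

lemma residue_Graph_Theta2:
  "residue (Graph g) (Theta2 x) = frag_extend (\<lambda>(\<alpha>,\<beta>). if \<beta> \<cdot>\<^sub>\<Gamma> psl_inv \<alpha> = g then bdG \<alpha> else 0) x"
  by (subst residue_Theta2, rule frag_extend_eq) (auto simp: residue_Theta2_frag_of)

lemma I_H_iff: "x \<in> I_H \<longleftrightarrow>
    (\<forall>y. frag_extend (\<lambda>(\<alpha>,\<beta>). if act \<beta> None = y then bdG \<alpha> else 0) x = 0)"
  (is "_ \<longleftrightarrow> (\<forall>y. ?P y)")
proof -
  have "x \<in> I_H \<longleftrightarrow>
      (\<forall>g. frag_extend (\<lambda>(\<alpha>,\<beta>). if act \<beta> None = act g None then bdG \<alpha> else 0) x = 0)"
    by (auto simp: I_H_def lcoset_Gamma_inf_iff)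
  also have "\<dots> \<longleftrightarrow> (\<forall>y. ?P y)"
    by (rule all_act_infty_iff)
  finally show ?thesis .
qed

lemma I_V_iff: "x \<in> I_V \<longleftrightarrow>
    (\<forall>y. frag_extend (\<lambda>(\<alpha>,\<beta>). if act \<alpha> (Some 0) = y then bdG \<beta> else 0) x = 0)"
  (is "_ \<longleftrightarrow> (\<forall>y. ?P y)")
proof -
  have "x \<in> I_V \<longleftrightarrow>
      (\<forall>g. frag_extend (\<lambda>(\<alpha>,\<beta>). if act \<alpha> (Some 0) = act g (Some 0) then bdG \<beta> else 0) x = 0)"
    by (auto simp: I_V_def lcoset_Gamma_0_iff)
  also have "\<dots> \<longleftrightarrow> (\<forall>y. ?P y)"
    by (rule all_act_0_iff)
  finally show ?thesis .
qed

lemma J2_iff_residues_Theta2: "x \<in> J2 \<longleftrightarrow> (\<forall>L. residue L (Theta2 x) = 0)"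
  by (simp add: all_line_iff J2_def I_H_iff I_V_iff I_D_def residue_Hor_Theta2
      residue_Ver_Theta2 residue_Graph_Theta2)

theorem Theta2_in_Bsub_iff: "Theta2 x \<in> Bsub \<longleftrightarrow> x \<in> J2"
  by (simp only: Bsub_iff_residues[OF Theta2_edges_on_lines] J2_iff_residues_Theta2)

section \<open>The image of Theta_2\<close>

definition triangle :: "P1 \<Rightarrow> P1 \<Rightarrow> P1 \<Rightarrow> P1 \<Rightarrow> (P2 \<times> P2) \<Rightarrow>\<^sub>0 int" where
  "triangle a b y y' = delta2 (frag_of ((a,y), (a,y'), (b,y')))"

definition square :: "P1 \<Rightarrow> P1 \<Rightarrow> P1 \<Rightarrow> P1 \<Rightarrow> (P2 \<times> P2) \<Rightarrow>\<^sub>0 int" where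
  "square a b y y' = edge (a,y) (b,y) + edge (b,y) (b,y') - edge (a,y') (b,y') - edge (a,y) (a,y')"

definition in_image_Theta2 :: "((P2 \<times> P2) \<Rightarrow>\<^sub>0 int) \<Rightarrow> bool" where
  "in_image_Theta2 c \<longleftrightarrow> (\<exists>x. c - Theta2 x \<in> Bsub)"

lemma in_image_Theta2_Bsub: "c \<in> Bsub \<Longrightarrow> in_image_Theta2 c"
  unfolding in_image_Theta2_def by (rule exI[of _ 0]) simp

lemma in_image_Theta2_diff:
  assumes "in_image_Theta2 c" "in_image_Theta2 d"
  shows "in_image_Theta2 (c - d)"
proof -
  obtain x y where "c - Theta2 x \<in> Bsub" "d - Theta2 y \<in> Bsub"
    using assms by (auto simp: in_image_Theta2_def)
  then have "(c - d) - Theta2 (x - y) \<in> Bsub"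
    using Bsub_diff by (fastforce simp: Theta2_diff algebra_simps)
  then show ?thesis unfolding in_image_Theta2_def ..
qed

lemma in_image_Theta2_add: "in_image_Theta2 c \<Longrightarrow> in_image_Theta2 d \<Longrightarrow> in_image_Theta2 (c + d)"
  using in_image_Theta2_diff[OF _ in_image_Theta2_diff[OF in_image_Theta2_Bsub[OF Bsub_0]]]
  by fastforce

lemma in_image_Theta2_cong: "in_image_Theta2 c \<Longrightarrow> d - c \<in> Bsub \<Longrightarrow> in_image_Theta2 d"
  using in_image_Theta2_add[OF in_image_Theta2_Bsub] by fastforce

lemma Theta2_frag_of_unimodular:
  assumes "act \<alpha> None = a" "act \<alpha> (Some 0) = b" "act \<beta> None = y" "act \<beta> (Some 0) = y'"
  shows "Theta2 (frag_of (\<alpha>,\<beta>)) = edge (b,y) (b,y') - edge (a,y) (b,y') + edge (a,y) (b,y)"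
  using assms by (simp add: Theta2_frag_of)

text \<open>For unimodular pairs, the image of Theta_2 contains the two triangles into which the
  diagonal of the square [a,b] \<times> [y,y'] cuts it: the one above is g.\<partial>T_2 for g = (\<alpha>,\<beta>),
  the one below is -(\<alpha>S,\<beta>S).\<partial>T_2 up to reversed edges.\<close>

lemma triangle_unimodular_in_image:
  assumes "unimodular a b" "unimodular y y'"
  shows "in_image_Theta2 (triangle a b y y')"
proof -
  obtain \<alpha> \<beta> where ab: "act \<alpha> None = a" "act \<alpha> (Some 0) = b"
    and yy': "act \<beta> None = y" "act \<beta> (Some 0) = y'"
    using assms by (auto simp: unimodular_def)
  have "act (\<beta> \<cdot>\<^sub>\<Gamma> psl_inv \<alpha>) a = y" "act (\<beta> \<cdot>\<^sub>\<Gamma> psl_inv \<alpha>) b = y'"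
    using ab yy' act_graph by auto
  then have rev: "edge (a,y') (b,y') + edge (b,y') (a,y') \<in> Bsub"
      "edge (a,y) (b,y') + edge (b,y') (a,y) \<in> Bsub"
      "edge (a,y) (a,y') + edge (a,y') (a,y) \<in> Bsub"
    by (auto intro: reversed_edge_on_line_in_Bsub[of "Hor y'"]
        reversed_edge_on_line_in_Bsub[of "Graph (\<beta> \<cdot>\<^sub>\<Gamma> psl_inv \<alpha>)"] reversed_edge_on_line_in_Bsub[of "Ver a"])
  have "Theta2 (frag_of (\<alpha> \<cdot>\<^sub>\<Gamma> S_mat, \<beta> \<cdot>\<^sub>\<Gamma> S_mat)) = edge (a,y') (a,y) - edge (b,y') (a,y) + edge (b,y') (a,y')"
    by (rule Theta2_frag_of_unimodular) (simp_all add: act_mult ab yy')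
  then have "triangle a b y y' - Theta2 (- frag_of (\<alpha> \<cdot>\<^sub>\<Gamma> S_mat, \<beta> \<cdot>\<^sub>\<Gamma> S_mat)) =
      (edge (a,y') (b,y') + edge (b,y') (a,y')) - (edge (a,y) (b,y') + edge (b,y') (a,y))
      + (edge (a,y) (a,y') + edge (a,y') (a,y))"
    by (simp add: triangle_def Theta2_minus algebra_simps)
  also have "\<dots> \<in> Bsub" by (rule Bsub_add[OF Bsub_diff[OF rev(1,2)] rev(3)])
  finally show ?thesis unfolding in_image_Theta2_def ..
qed

lemma square_unimodular_in_image:
  assumes "unimodular a b" "unimodular y y'"
  shows "in_image_Theta2 (square a b y y')"
proof -
  obtain \<alpha> \<beta> where "act \<alpha> None = a" "act \<alpha> (Some 0) = b" "act \<beta> None = y" "act \<beta> (Some 0) = y'"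
    using assms by (auto simp: unimodular_def)
  then have "in_image_Theta2 (edge (b,y) (b,y') - edge (a,y) (b,y') + edge (a,y) (b,y))"
    unfolding in_image_Theta2_def
    by (intro exI[of _ "frag_of (\<alpha>,\<beta>)"]) (simp add: Theta2_frag_of_unimodular Bsub_0)
  moreover have "square a b y y' =
      (edge (b,y) (b,y') - edge (a,y) (b,y') + edge (a,y) (b,y)) - triangle a b y y'"
    by (simp add: square_def triangle_def algebra_simps)
  ultimately show ?thesis
    using in_image_Theta2_diff triangle_unimodular_in_image[OF assms] by metis
qed

lemma square_add_horizontal: "square a c y y' - (square a b y y' + square b c y y') \<in> Bsub"
proof -
  have "square a c y y' - (square a b y y' + square b c y y') =
      (edge (a,y') (b,y') + edge (b,y') (c,y') - edge (a,y') (c,y'))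
    - (edge (a,y) (b,y) + edge (b,y) (c,y) - edge (a,y) (c,y))"
    by (simp add: square_def algebra_simps)
  also have "\<dots> \<in> Bsub"
    by (intro Bsub_diff triangle_on_line_in_Bsub[of "Hor y'"] triangle_on_line_in_Bsub[of "Hor y"]) simp_all
  finally show ?thesis .
qed

lemma square_add_vertical: "square a b y y'' - (square a b y y' + square a b y' y'') \<in> Bsub"
proof -
  have "square a b y y'' - (square a b y y' + square a b y' y'') =
      (edge (a,y) (a,y') + edge (a,y') (a,y'') - edge (a,y) (a,y''))
    - (edge (b,y) (b,y') + edge (b,y') (b,y'') - edge (b,y) (b,y''))"
    by (simp add: square_def algebra_simps)
  also have "\<dots> \<in> Bsub"
    by (intro Bsub_diff triangle_on_line_in_Bsub[of "Ver a"] triangle_on_line_in_Bsub[of "Ver b"]) simp_all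
  finally show ?thesis .
qed

lemma square_in_image: "in_image_Theta2 (square a b y y')"
proof -
  have column: "in_image_Theta2 (square a b y y')" if "unimodular a b" for a b
    using unimodular_chain[of y y']
  proof (induction rule: rtranclp_induct)
    case base
    have "square a b y y = edge (b,y) (b,y) - edge (a,y) (a,y)" by (simp add: square_def)
    then show ?case
      by (metis in_image_Theta2_Bsub Bsub_diff degenerate_edge_in_Bsub)
  next
    case (step y' y'')
    then show ?case
      using in_image_Theta2_add square_unimodular_in_image[OF that] in_image_Theta2_cong
        square_add_vertical by metis
  qed
  show ?thesis
    using unimodular_chain[of a b]
  proof (induction rule: rtranclp_induct)
    case base
    have "square a a y y' = edge (a,y) (a,y) - edge (a,y') (a,y')" by (simp add: square_def)
    then show ?case
      by (metis in_image_Theta2_Bsub Bsub_diff degenerate_edge_in_Bsub)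
  next
    case (step b c)
    then show ?case
      using in_image_Theta2_add column in_image_Theta2_cong square_add_horizontal by metis
  qed
qed

lemma triangle_add:
  fixes a b c :: P1 and g :: psl2
  defines "y \<equiv> act g a" and "y' \<equiv> act g b" and "y'' \<equiv> act g c"
  shows "triangle a c y y'' - (triangle a b y y' + triangle b c y' y'' - square a b y' y'') \<in> Bsub"
proof -
  have "triangle a c y y'' - (triangle a b y y' + triangle b c y' y'' - square a b y' y'') =
      (edge (a,y) (b,y') + edge (b,y') (c,y'') - edge (a,y) (c,y''))
    - (edge (a,y) (a,y') + edge (a,y') (a,y'') - edge (a,y) (a,y''))
    - (edge (a,y'') (b,y'') + edge (b,y'') (c,y'') - edge (a,y'') (c,y''))"
    by (simp add: triangle_def square_def algebra_simps)
  also have "\<dots> \<in> Bsub"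
    by (intro Bsub_diff triangle_on_line_in_Bsub[of "Graph g"] triangle_on_line_in_Bsub[of "Ver a"]
        triangle_on_line_in_Bsub[of "Hor y''"]) (simp_all add: y_def y'_def y''_def)
  finally show ?thesis .
qed

lemma triangle_graph_in_image: "in_image_Theta2 (triangle a c (act g a) (act g c))"
  using unimodular_chain[of a c]
proof (induction rule: rtranclp_induct)
  case base
  show ?case
    using in_image_Theta2_Bsub[OF degenerate_edge_in_Bsub] by (simp add: triangle_def)
next
  case (step b c)
  have "in_image_Theta2 (triangle a b (act g a) (act g b) + triangle b c (act g b) (act g c)
      - square a b (act g b) (act g c))"
    by (intro in_image_Theta2_diff in_image_Theta2_add step.IH square_in_image
        triangle_unimodular_in_image step.hyps(2) unimodular_act)
  then show ?case using in_image_Theta2_cong triangle_add by blast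
qed

lemma H1cls_eq_iff: "H1cls c = H1cls d \<longleftrightarrow> c - d \<in> Bsub"
proof
  assume "H1cls c = H1cls d"
  moreover have "c \<in> H1cls c" unfolding H1cls_def using Bsub_0 by force
  ultimately obtain b where "c = d + b" "b \<in> Bsub" by (auto simp: H1cls_def)
  then show "c - d \<in> Bsub" by simp
next
  assume cd: "c - d \<in> Bsub"
  have "d + b' \<in> H1cls c" if "b' \<in> Bsub" for b'
    using Bsub_diff[OF that cd] unfolding H1cls_def by (intro CollectI exI[of _ "b' - (c - d)"]) auto
  moreover have "c + b' \<in> H1cls d" if "b' \<in> Bsub" for b'
    using Bsub_add[OF cd that] unfolding H1cls_def by (intro CollectI exI[of _ "(c - d) + b'"]) auto
  ultimately show "H1cls c = H1cls d" unfolding H1cls_def by blast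
qed

lemma triangle_frag_of_in_H1gens:
  "triangle (act \<alpha> (Some 0)) (act \<alpha> None) (act \<beta> (Some 0)) (act \<beta> None) \<in> H1gens"
proof -
  let ?g = "\<beta> \<cdot>\<^sub>\<Gamma> psl_inv \<alpha>"
  have "triangle (act \<alpha> (Some 0)) (act \<alpha> None) (act ?g (act \<alpha> (Some 0))) (act ?g (act \<alpha> None))
    \<in> H1gens"
    unfolding H1gens_def triangle_def by blast
  then show ?thesis by (simp only: act_graph)
qed

lemma Theta2_frag_of_plus_triangle_in_Bsub:
  "Theta2 (frag_of (\<alpha>,\<beta>))
    + triangle (act \<alpha> (Some 0)) (act \<alpha> None) (act \<beta> (Some 0)) (act \<beta> None) \<in> Bsub"
proof -
  let ?p0 = "(act \<alpha> None, act \<beta> None)" and ?p1 = "(act \<alpha> (Some 0), act \<beta> None)"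
    and ?p2 = "(act \<alpha> (Some 0), act \<beta> (Some 0))"
  have "Theta2 (frag_of (\<alpha>,\<beta>))
      + triangle (act \<alpha> (Some 0)) (act \<alpha> None) (act \<beta> (Some 0)) (act \<beta> None)
    = (edge ?p1 ?p2 + edge ?p2 ?p1) - (edge ?p0 ?p2 + edge ?p2 ?p0) + (edge ?p0 ?p1 + edge ?p1 ?p0)"
    by (simp add: Theta2_frag_of triangle_def algebra_simps)
  also have "\<dots> \<in> Bsub"
    by (intro Bsub_add[OF Bsub_diff] reversed_edge_on_line_in_Bsub[OF Theta2_frag_of_on_lines(1,2)]
        reversed_edge_on_line_in_Bsub[OF Theta2_frag_of_on_lines(3,4)]
        reversed_edge_on_line_in_Bsub[OF Theta2_frag_of_on_lines(5,6)])
  finally show ?thesis .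
qed

lemma zspan_H1gens_in_image: "c \<in> zspan H1gens \<Longrightarrow> in_image_Theta2 c"
proof (induction rule: zspan.induct)
  case zspan_zero
  then show ?case by (rule in_image_Theta2_Bsub[OF Bsub_0])
next
  case (zspan_gen t)
  then obtain a b g where "t = triangle a b (act g a) (act g b)"
    by (auto simp: H1gens_def triangle_def)
  then show ?case using triangle_graph_in_image by simp
next
  case (zspan_diff c d)
  then show ?case by (blast intro: in_image_Theta2_diff)
qed

lemma H1cls_Theta2_in_span: "\<exists>c \<in> zspan H1gens. H1cls (Theta2 x) = H1cls c"
proof
  let ?gen = "\<lambda>(\<alpha>,\<beta>). triangle (act \<alpha> (Some 0)) (act \<alpha> None) (act \<beta> (Some 0)) (act \<beta> None)"
  show "frag_extend (\<lambda>k. - ?gen k) x \<in> zspan H1gens"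
    by (rule zspan_frag_extend) (auto intro: zspan_neg[OF zspan_gen] triangle_frag_of_in_H1gens)
  have "Theta2 x - frag_extend (\<lambda>k. - ?gen k) x = frag_extend (\<lambda>k. Theta2 (frag_of k) + ?gen k) x"
    by (simp add: Theta2_def frag_extend_fun_add frag_extend_fun_minus)
  also have "\<dots> \<in> Bsub"
    by (rule Bsub_frag_extend) (auto simp: Theta2_frag_of_plus_triangle_in_Bsub)
  finally show "H1cls (Theta2 x) = H1cls (frag_extend (\<lambda>k. - ?gen k) x)"
    by (simp add: H1cls_eq_iff)
qed

lemma H1cls_span_in_range: "c \<in> zspan H1gens \<Longrightarrow> \<exists>x. H1cls c = H1cls (Theta2 x)"
  using zspan_H1gens_in_image by (auto simp: in_image_Theta2_def H1cls_eq_iff)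

theorem mainTheorem13:
  shows "{x. H1cls (Theta2 x) = H1cls 0} = J2
         \<and> range (\<lambda>x. H1cls (Theta2 x)) = H1cls ` zspan H1gens"
proof
  show "{x. H1cls (Theta2 x) = H1cls 0} = J2"
    by (auto simp: H1cls_eq_iff Theta2_in_Bsub_iff)
  show "range (\<lambda>x. H1cls (Theta2 x)) = H1cls ` zspan H1gens"
    using H1cls_Theta2_in_span H1cls_span_in_range by blast
qed

end
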